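(* Let $\Gamma\neq\mathbb N$ be the semigroup associated to an irreducible plane curve singularity, minimally generated by $r_0<\cdots<r_h$, with conductor $c$. Then $c\ge \frac53 2^{2h}-3\cdot 2^h+\frac43$.
   Context: A numerical semigroup is a submonoid of $(\mathbb N,+)$ with finite complement in $\mathbb N$; it has a unique minimal generating system. The conductor is $c=\mathrm F(\Gamma)+1$, where $\mathrm F(\Gamma)$ is the largest integer not in $\Gamma$. $\langle X\rangle$ is the submonoid generated by $X$. For an arrangement $(r_0,\ldots,r_h)$ of the minimal generators, set $d_k=\gcd(r_0,\ldots,r_{k-1})$ and $e_k=d_k/d_{k+1}$. A set $A$ of positive integers with nontrivial partition $A=A_1\cup A_2$ is the gluing of $A_1$ and $A_2$ if $\mathrm{lcm}(\gcd A_1,\gcd A_2)\in\langle A_1\rangle\cap\langle A_2\rangle$. $\Gamma$ is free for $(r_0,\ldots,r_h)$ if $h=0$, or $h\ge1$, $\{r_0,\ldots,r_h\}$ is the gluing of $\{r_0,\ldots,r_{h-1}\}$ and $\{r_h\}$, and $\langle r_0/d_h,\ldots,r_{h-1}/d_h\rangle$ is free for $(r_0/d_h,\ldots,r_{h-1}/d_h)$. $\Gamma$ is telescopic if it is free for the increasing arrangement $r_0<\cdots<r_h$. $\Gamma$ is the semigroup associated to an irreducible plane curve singularity if it is telescopic and $e_kr_k<r_{k+1}$ for all $k=1,\ldots,h-1$. *)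

theory Defs
  imports Complex_Main
begin

definition numerical_semigroup :: "nat set \<Rightarrow> bool" where
  "numerical_semigroup G \<longleftrightarrow> 0 \<in> G \<and> (\<forall>a\<in>G. \<forall>b\<in>G. a + b \<in> G) \<and> finite (UNIV - G)"

inductive_set monoid_gen :: "nat set \<Rightarrow> nat set" for X :: "nat set" where
  zero: "0 \<in> monoid_gen X"
| gen: "x \<in> X \<Longrightarrow> x \<in> monoid_gen X"
| add: "a \<in> monoid_gen X \<Longrightarrow> b \<in> monoid_gen X \<Longrightarrow> a + b \<in> monoid_gen X"

definition mingens :: "nat set \<Rightarrow> nat set" where
  "mingens G = {x \<in> G. x \<noteq> 0 \<and> \<not> (\<exists>a\<in>G. \<exists>b\<in>G. a \<noteq> 0 \<and> b \<noteq> 0 \<and> x = a + b)}"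

definition min_gen_arr :: "nat set \<Rightarrow> nat list \<Rightarrow> bool" where
  "min_gen_arr G rs \<longleftrightarrow> distinct rs \<and> set rs = mingens G"

definition conductor :: "nat set \<Rightarrow> nat" where
  "conductor G = Max (UNIV - G) + 1"

definition gluing :: "nat set \<Rightarrow> nat set \<Rightarrow> bool" where
  "gluing A1 A2 \<longleftrightarrow> A1 \<noteq> {} \<and> A2 \<noteq> {} \<and> A1 \<inter> A2 = {} \<and>
     lcm (Gcd A1) (Gcd A2) \<in> monoid_gen A1 \<inter> monoid_gen A2"

text \<open>Freeness, on the reversed arrangement (last generator first), so that
free_rev G [r_h, ..., r_0] means G is free for (r_0, ..., r_h).\<close>
function free_rev :: "nat set \<Rightarrow> nat list \<Rightarrow> bool" where
  "free_rev G [] = False"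
| "free_rev G [r] = min_gen_arr G [r]"
| "free_rev G (x # y # ys) =
     (let A1 = set (y # ys); d = Gcd A1; zs = map (\<lambda>a. a div d) (y # ys) in
      min_gen_arr G (rev (x # y # ys)) \<and> gluing A1 {x} \<and>
      free_rev (monoid_gen (set zs)) zs)"
  by pat_completeness auto
termination
  by (relation "measure (\<lambda>(G, xs). length xs)") auto

definition free_for :: "nat set \<Rightarrow> nat list \<Rightarrow> bool" where
  "free_for G rs \<longleftrightarrow> free_rev G (rev rs)"

definition telescopic :: "nat set \<Rightarrow> bool" where
  "telescopic G \<longleftrightarrow> numerical_semigroup G \<and> free_for G (sorted_list_of_set (mingens G))"

definition dseq :: "nat list \<Rightarrow> nat \<Rightarrow> nat" where
  "dseq rs k = Gcd (set (take k rs))"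

definition eseq :: "nat list \<Rightarrow> nat \<Rightarrow> nat" where
  "eseq rs k = dseq rs k div dseq rs (Suc k)"

definition plane_curve_semigroup :: "nat set \<Rightarrow> bool" where
  "plane_curve_semigroup G \<longleftrightarrow> telescopic G \<and>
     (let rs = sorted_list_of_set (mingens G); h = length rs - 1 in
      \<forall>k. 1 \<le> k \<and> k \<le> h - 1 \<longrightarrow> eseq rs k * rs ! k < rs ! (Suc k))"

end

theory Submission
  imports Defs
begin

text \<open>
  Write the arrangement as (r_0, ..., r_{h-1}, x), let d = gcd(r_0, ..., r_{h-1}) and
  s = (r_0/d, ..., r_{h-1}/d). Since gcd(d, x) = 1, the gluing condition says that d x lies
  in d <s>, i.e. x lies in <s>, and the semigroup is d <s> + x N with <s> free for s.
  If f is a gap of <s> (f = -1 when <s> = N), then d f + (d - 1) x is a gap of the whole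
  semigroup. Minimality of x forbids d to divide x, which gives d >= 2 and, at every level,
  e_k >= 2; the plane curve condition then yields x > 2 r_{h-1} = 2 d s_{h-1} >= 4 s_{h-1}.
  Induction on h produces a gap f with 3 f >= 5 4^h - 9 2^h + 1 together with
  6 r_h >= 5 4^h - 2, and the conductor exceeds every gap.
\<close>

lemma monoid_gen_least:
  assumes "A \<subseteq> G" "0 \<in> G" "\<forall>a\<in>G. \<forall>b\<in>G. a + b \<in> G"
  shows "monoid_gen A \<subseteq> G"
proof
  fix y assume "y \<in> monoid_gen A"
  then show "y \<in> G" by induction (use assms in auto)
qed

lemma monoid_gen_mono: "A \<subseteq> B \<Longrightarrow> monoid_gen A \<subseteq> monoid_gen B"
  by (rule monoid_gen_least) (auto intro: monoid_gen.intros)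

lemma mult_in_monoid_gen: "a \<in> monoid_gen A \<Longrightarrow> m * a \<in> monoid_gen A"
  by (induction m) (auto intro: monoid_gen.intros)

lemma Gcd_dvd_monoid_gen: "y \<in> monoid_gen A \<Longrightarrow> Gcd A dvd y"
  by (induction rule: monoid_gen.induct) auto

lemma monoid_gen_one: "1 \<in> A \<Longrightarrow> monoid_gen A = UNIV"
  using mult_in_monoid_gen[OF monoid_gen.gen, of 1 A] by auto

lemma monoid_gen_image_mult: "monoid_gen ((*) d ` A) = (*) d ` monoid_gen A"
proof
  show "monoid_gen ((*) d ` A) \<subseteq> (*) d ` monoid_gen A"
  proof (rule monoid_gen_least)
    show "\<forall>a\<in>(*) d ` monoid_gen A. \<forall>b\<in>(*) d ` monoid_gen A. a + b \<in> (*) d ` monoid_gen A"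
      by (auto simp flip: distrib_left intro: monoid_gen.add)
  qed (auto intro: monoid_gen.intros)
  show "(*) d ` monoid_gen A \<subseteq> monoid_gen ((*) d ` A)"
  proof clarify
    fix y assume "y \<in> monoid_gen A"
    then show "d * y \<in> monoid_gen ((*) d ` A)"
      by induction (auto simp: distrib_left intro: monoid_gen.intros)
  qed
qed

lemma monoid_gen_insert: "monoid_gen (insert x A) = {y + k * x | y k. y \<in> monoid_gen A}"
proof
  show "monoid_gen (insert x A) \<subseteq> {y + k * x | y k. y \<in> monoid_gen A}"
  proof (rule monoid_gen_least)
    show "insert x A \<subseteq> {y + k * x | y k. y \<in> monoid_gen A}"
      by (force intro: monoid_gen.intros)
    show "0 \<in> {y + k * x | y k. y \<in> monoid_gen A}"
      by (force intro: monoid_gen.intros)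
    show "\<forall>a\<in>{y + k * x | y k. y \<in> monoid_gen A}. \<forall>b\<in>{y + k * x | y k. y \<in> monoid_gen A}.
            a + b \<in> {y + k * x | y k. y \<in> monoid_gen A}"
    proof clarify
      fix y k y' k' assume "y \<in> monoid_gen A" "y' \<in> monoid_gen A"
      then show "\<exists>z m. y + k * x + (y' + k' * x) = z + m * x \<and> z \<in> monoid_gen A"
        by (intro exI[of _ "y + y'"] exI[of _ "k + k'"]) (auto simp: algebra_simps intro: monoid_gen.add)
    qed
  qed
  show "{y + k * x | y k. y \<in> monoid_gen A} \<subseteq> monoid_gen (insert x A)"
  proof clarify
    fix y k assume "y \<in> monoid_gen A"
    then have "y \<in> monoid_gen (insert x A)" using monoid_gen_mono by blast
    moreover have "k * x \<in> monoid_gen (insert x A)" by (intro mult_in_monoid_gen monoid_gen.gen) simp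
    ultimately show "y + k * x \<in> monoid_gen (insert x A)" by (rule monoid_gen.add)
  qed
qed

lemma monoid_gen_sum_of_nonzero:
  assumes "y \<in> monoid_gen A" "y \<notin> A" "y \<noteq> 0"
  shows "\<exists>a\<in>monoid_gen A. \<exists>b\<in>monoid_gen A. a \<noteq> 0 \<and> b \<noteq> 0 \<and> y = a + b"
  using assms
proof induction
  case (add a b)
  show ?case
  proof (cases "a = 0 \<or> b = 0")
    case True
    then show ?thesis using add by (elim disjE) simp_all
  next
    case False
    then show ?thesis using add.hyps by blast
  qed
qed auto

lemma mingens_notin_monoid_gen:
  assumes "x \<in> mingens (monoid_gen C)" "A \<subseteq> C" "x \<notin> A"
  shows "x \<notin> monoid_gen A"
proof
  assume "x \<in> monoid_gen A"
  moreover have "x \<noteq> 0" using assms(1) unfolding mingens_def by simp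
  ultimately obtain a b where "a \<in> monoid_gen A" "b \<in> monoid_gen A" "a \<noteq> 0" "b \<noteq> 0" "x = a + b"
    using monoid_gen_sum_of_nonzero assms(3) by blast
  with monoid_gen_mono[OF assms(2)] assms(1) show False unfolding mingens_def by blast
qed

lemma monoid_gen_mingens:
  assumes "numerical_semigroup G"
  shows "monoid_gen (mingens G) = G"
proof
  have "0 \<in> G" "\<forall>a\<in>G. \<forall>b\<in>G. a + b \<in> G"
    using assms unfolding numerical_semigroup_def by auto
  then show "monoid_gen (mingens G) \<subseteq> G"
    by (intro monoid_gen_least) (auto simp: mingens_def)
  show "G \<subseteq> monoid_gen (mingens G)"
  proof
    fix y assume "y \<in> G"
    then show "y \<in> monoid_gen (mingens G)"
    proof (induction y rule: less_induct)
      case (less y)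
      show ?case
      proof (cases "y = 0 \<or> y \<in> mingens G")
        case True then show ?thesis by (auto intro: monoid_gen.zero monoid_gen.gen)
      next
        case False
        then obtain a b where "a \<in> G" "b \<in> G" "a \<noteq> 0" "b \<noteq> 0" "y = a + b"
          using less.prems unfolding mingens_def by auto
        then show ?thesis using less.IH by (auto intro: monoid_gen.add)
      qed
    qed
  qed
qed

lemma Gcd_mingens_numerical_semigroup:
  assumes "numerical_semigroup G"
  shows "Gcd (mingens G) = 1"
proof -
  have "finite (UNIV - G)" using assms unfolding numerical_semigroup_def by simp
  then obtain m where "\<forall>n\<in>UNIV - G. n \<le> m" by (auto simp: finite_nat_set_iff_bounded_le)
  then have "m + 1 \<in> G" "m + 2 \<in> G" by force+
  moreover have "Gcd (mingens G) dvd n" if "n \<in> G" for n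
    using Gcd_dvd_monoid_gen[of n "mingens G"] that by (simp add: monoid_gen_mingens[OF assms])
  ultimately have "Gcd (mingens G) dvd m + 1" "Gcd (mingens G) dvd m + 2" by blast+
  then have "Gcd (mingens G) dvd (m + 2) - (m + 1)" using dvd_diff_nat by blast
  then show ?thesis by simp
qed

lemma gap_less_conductor: "finite (UNIV - G) \<Longrightarrow> n \<notin> G \<Longrightarrow> n < conductor G"
  unfolding conductor_def by (simp add: le_imp_less_Suc)

lemma dseq_append: "k \<le> length B \<Longrightarrow> dseq (B @ C) k = dseq B k"
  unfolding dseq_def by simp

lemma eseq_append: "k < length B \<Longrightarrow> eseq (B @ C) k = eseq B k"
  unfolding eseq_def by (simp add: dseq_append)

lemma dseq_map_mult: "dseq (map ((*) d) s) k = d * dseq s k"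
  unfolding dseq_def by (simp add: take_map Gcd_mult)

lemma eseq_map_mult: "d \<noteq> 0 \<Longrightarrow> eseq (map ((*) d) s) k = eseq s k"
  unfolding eseq_def by (simp add: dseq_map_mult)

lemma eseq_snoc_length: "eseq (B @ [x]) (length B) = Gcd (set B) div gcd (Gcd (set B)) x"
  unfolding eseq_def dseq_def by (simp add: gcd.commute)

lemma two_le_div_gcd:
  fixes d x :: nat
  assumes "d \<noteq> 0" "\<not> d dvd x"
  shows "2 \<le> d div gcd d x"
proof -
  obtain q where q: "d = gcd d x * q" by (metis gcd_dvd1 dvdE)
  have "gcd d x \<noteq> 0" using assms(1) by simp
  have "q \<noteq> 0" using q assms(1) by (metis mult_0_right)
  moreover have "q \<noteq> 1" using q assms(2) by (metis gcd_dvd2 mult.right_neutral)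
  moreover have "d div gcd d x = q" by (metis q \<open>gcd d x \<noteq> 0\<close> nonzero_mult_div_cancel_left)
  ultimately show ?thesis by simp
qed

lemma free_rev_Cons:
  "zs \<noteq> [] \<Longrightarrow> free_rev G (x # zs) \<longleftrightarrow>
     min_gen_arr G (rev (x # zs)) \<and> gluing (set zs) {x} \<and>
     free_rev (monoid_gen (set (map (\<lambda>a. a div Gcd (set zs)) zs))) (map (\<lambda>a. a div Gcd (set zs)) zs)"
  by (cases zs) (simp, simp only: free_rev.simps Let_def)

lemma free_for_snocE:
  assumes "free_for (monoid_gen (set (B @ [x]))) (B @ [x])" "B \<noteq> []"
  obtains d s where "B = map ((*) d) s" "Gcd (set B) = d" "2 \<le> d" "\<not> d dvd x"
    "lcm d x \<in> monoid_gen (set B)" "Gcd (set s) = 1" "free_for (monoid_gen (set s)) s"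
proof -
  define G where "G = monoid_gen (set (B @ [x]))"
  define d where "d = Gcd (set B)"
  define s where "s = map (\<lambda>a. a div d) B"
  have arr: "min_gen_arr G (B @ [x])" and glue: "gluing (set B) {x}"
    and free: "free_for (monoid_gen (set s)) s"
    using assms unfolding free_for_def G_def s_def d_def by (simp_all add: free_rev_Cons rev_map)
  then have "distinct (B @ [x])" and gens: "set (B @ [x]) = mingens G"
    unfolding min_gen_arr_def by simp_all
  have "0 \<notin> mingens G" unfolding mingens_def by simp
  then have "x \<notin> set B" "x \<in> mingens G" "0 \<notin> set B"
    using \<open>distinct (B @ [x])\<close> by (simp_all flip: gens)
  then have x: "x \<notin> monoid_gen (set B)" unfolding G_def by (intro mingens_notin_monoid_gen) auto
  have lcm: "lcm d x \<in> monoid_gen (set B)" using glue unfolding gluing_def d_def by simp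
  have ndvd: "\<not> d dvd x"
  proof
    assume "d dvd x"
    then have "lcm d x = x" by (simp add: lcm_proj2_if_dvd)
    with lcm x show False by simp
  qed
  obtain b where "b \<in> set B" using assms(2) by (cases B) auto
  then have "d dvd b" "b \<noteq> 0" using \<open>0 \<notin> set B\<close> unfolding d_def by (simp, metis)
  then have "d \<noteq> 0" by auto
  moreover have "d \<noteq> 1" using ndvd by auto
  ultimately have d2: "2 \<le> d" by simp
  have cancel: "d * (a div d) = a" if "a \<in> set B" for a
    using that unfolding d_def by simp
  have B: "B = map ((*) d) s"
    unfolding s_def map_map by (rule sym, rule map_idI) (simp add: cancel)
  have "d = Gcd (set B)" by (fact d_def)
  also have "\<dots> = Gcd (set (map ((*) d) s))" by (simp only: B)
  also have "\<dots> = d * Gcd (set s)" by (simp add: Gcd_mult)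
  finally have "Gcd (set s) = 1" using d2 by simp
  from that[OF B d_def[symmetric] d2 ndvd lcm this free] show ?thesis .
qed

lemma free_for_eseq_ge_2:
  assumes "free_for (monoid_gen (set rs)) rs" "0 < k" "k < length rs"
  shows "2 \<le> eseq rs k"
  using assms
proof (induction "length rs" arbitrary: rs k rule: less_induct)
  case less
  obtain B x where rs: "rs = B @ [x]" using less.prems(3) by (cases rs rule: rev_cases) auto
  with less.prems have "B \<noteq> []" by auto
  with less.prems(1) obtain d s where B: "B = map ((*) d) s" and gcdB: "Gcd (set B) = d"
    and "2 \<le> d" "\<not> d dvd x" "lcm d x \<in> monoid_gen (set B)" "Gcd (set s) = 1"
    and free: "free_for (monoid_gen (set s)) s"
    unfolding rs by (rule free_for_snocE)
  show ?case
  proof (cases "k = length B")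
    case True
    then have "eseq rs k = d div gcd d x" using eseq_snoc_length[of B x] unfolding rs gcdB by simp
    then show ?thesis using two_le_div_gcd \<open>2 \<le> d\<close> \<open>\<not> d dvd x\<close> by simp
  next
    case False
    then have "k < length s" using less.prems(3) unfolding rs B by simp
    then have "eseq rs k = eseq s k"
      using \<open>2 \<le> d\<close> unfolding rs B by (simp add: eseq_append eseq_map_mult)
    also have "2 \<le> eseq s k"
      using less.hyps[OF _ free less.prems(2) \<open>k < length s\<close>] unfolding rs B by simp
    finally show ?thesis by simp
  qed
qed

lemma gluing_gap:
  fixes f :: int
  assumes "coprime d x" "x \<in> monoid_gen A" "f \<notin> int ` monoid_gen A"
  shows "int d * f + (int d - 1) * int x \<notin> int ` monoid_gen (insert x ((*) d ` A))"
proof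
  assume "int d * f + (int d - 1) * int x \<in> int ` monoid_gen (insert x ((*) d ` A))"
  then obtain g where g: "g \<in> monoid_gen (insert x ((*) d ` A))"
    and fg: "int d * f + (int d - 1) * int x = int g" by auto
  from g obtain y k where y: "y \<in> monoid_gen A" and "g = d * y + k * x"
    by (auto simp: monoid_gen_insert monoid_gen_image_mult)
  with fg have "int d * f + (int d - 1) * int x = int (d * y + k * x)" by simp
  then have eq: "int d * (f + int x - int y) = int ((k + 1) * x)" by (simp add: algebra_simps)
  then have "int d dvd int ((k + 1) * x)" by (metis dvd_triv_left)
  then have "d dvd (k + 1) * x" by (simp only: of_nat_dvd_iff)
  then have "d dvd k + 1" using coprime_dvd_mult_left_iff[OF assms(1)] by blast
  then obtain q where q: "k + 1 = d * q" by (elim dvdE)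
  then obtain q' where q': "q = Suc q'" by (cases q) auto
  have "d \<noteq> 0" using q by (intro notI) simp
  have "int ((k + 1) * x) = int d * (int q * int x)" unfolding q by simp
  with eq have "int d * (f + int x - int y) = int d * (int q * int x)" by (rule trans)
  then have "f + int x - int y = int q * int x" using \<open>d \<noteq> 0\<close> by simp
  then have "f = int (y + q' * x)" unfolding q' by (simp add: algebra_simps)
  moreover have "y + q' * x \<in> monoid_gen A" using y assms(2) by (intro monoid_gen.add mult_in_monoid_gen)
  ultimately show False using assms(3) by blast
qed

lemma gap_bound_ge_3:
  assumes "1 \<le> h"
  shows "(3::int) \<le> 5 * 4 ^ h - 9 * 2 ^ h + 1"
proof -
  define Q :: int where "Q = 2 ^ h"
  have "(2::int) ^ 1 \<le> 2 ^ h" by (rule power_increasing) (use assms in auto)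
  then have "2 \<le> Q" unfolding Q_def by simp
  then have "2 * Q \<le> Q * Q" by simp
  moreover have "(4::int) ^ h = Q * Q" unfolding Q_def by (simp flip: power_mult_distrib)
  ultimately show ?thesis using \<open>2 \<le> Q\<close> unfolding Q_def by linarith
qed

lemma gap_bound_step:
  fixes f :: int and d x s h :: nat
  assumes "1 \<le> h" "2 \<le> d" "4 * s < x"
    and "5 * 4 ^ h - 9 * 2 ^ h + 1 \<le> 3 * f" "5 * 4 ^ h - 2 \<le> 6 * int s"
  shows "5 * 4 ^ Suc h - 9 * 2 ^ Suc h + 1 \<le> 3 * (int d * f + (int d - 1) * int x)"
    and "5 * 4 ^ Suc h - 2 \<le> 6 * int x"
proof -
  have "0 \<le> f" using gap_bound_ge_3[OF assms(1)] assms(4) by linarith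
  then have "0 \<le> (int d - 2) * (f + int x)" using assms(2) by simp
  then have "3 * (2 * f + int x) \<le> 3 * (int d * f + (int d - 1) * int x)"
    by (simp add: algebra_simps)
  moreover have "5 * 4 ^ Suc h - 9 * 2 ^ Suc h + 1 \<le> 3 * (2 * f + int x)"
    using assms(3-5) by simp
  ultimately show "5 * 4 ^ Suc h - 9 * 2 ^ Suc h + 1 \<le> 3 * (int d * f + (int d - 1) * int x)"
    by (rule order_trans[rotated])
  show "5 * 4 ^ Suc h - 2 \<le> 6 * int x" using assms(3,5) by simp
qed

lemma gap_bound_base:
  fixes d x :: nat
  assumes "2 \<le> d" "d < x"
  shows "5 * 4 ^ 1 - 9 * 2 ^ 1 + 1 \<le> 3 * (int d * -1 + (int d - 1) * int x)"
    and "5 * 4 ^ 1 - 2 \<le> 6 * int x"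
proof -
  have "1 * 2 \<le> (int d - 1) * (int x - 1)" by (rule mult_mono) (use assms in auto)
  moreover have "int d * -1 + (int d - 1) * int x = (int d - 1) * (int x - 1) - 1"
    by (simp add: algebra_simps)
  ultimately show "5 * 4 ^ 1 - 9 * 2 ^ 1 + 1 \<le> 3 * (int d * -1 + (int d - 1) * int x)" by simp
  show "5 * 4 ^ 1 - 2 \<le> 6 * int x" using assms by simp
qed

lemma free_for_gap_bound:
  assumes "free_for (monoid_gen (set rs)) rs" "sorted_wrt (<) rs" "Gcd (set rs) = 1"
    and "length rs = Suc h" "1 \<le> h" "\<forall>k. 1 \<le> k \<and> k < h \<longrightarrow> 2 * rs ! k < rs ! Suc k"
  shows "\<exists>f. f \<notin> int ` monoid_gen (set rs) \<and> 5 * 4 ^ h - 9 * 2 ^ h + 1 \<le> 3 * f \<and>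
    5 * 4 ^ h - 2 \<le> 6 * int (rs ! h)"
  using assms
proof (induction h arbitrary: rs)
  case 0
  then show ?case by simp
next
  case (Suc h)
  obtain B x where rs: "rs = B @ [x]" using Suc.prems(4) by (cases rs rule: rev_cases) auto
  with Suc.prems(4) have "length B = Suc h" by simp
  with Suc.prems(1) obtain d s where B: "B = map ((*) d) s" and gcdB: "Gcd (set B) = d"
    and d2: "2 \<le> d" and "\<not> d dvd x" and lcm: "lcm d x \<in> monoid_gen (set B)"
    and gcds: "Gcd (set s) = 1" and free: "free_for (monoid_gen (set s)) s"
    unfolding rs by (elim free_for_snocE) auto
  have lens: "length s = Suc h" using \<open>length B = Suc h\<close> B by simp
  have rs_nth: "rs ! k = d * s ! k" if "k < Suc h" for k
    using that lens unfolding rs B by (simp add: nth_append)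
  have x_nth: "rs ! Suc h = x" using lens unfolding rs B by (simp add: nth_append)
  have "coprime d x"
    using Suc.prems(3) gcdB unfolding rs by (simp add: coprime_iff_gcd_eq_1 gcd.commute)
  with lcm have "d * x \<in> (*) d ` monoid_gen (set s)"
    unfolding B by (simp add: lcm_coprime monoid_gen_image_mult)
  then have "x \<in> monoid_gen (set s)" using d2 by auto
  have gap: "int d * f + (int d - 1) * int x \<notin> int ` monoid_gen (set rs)"
    if "f \<notin> int ` monoid_gen (set s)" for f
    using gluing_gap[OF \<open>coprime d x\<close> \<open>x \<in> monoid_gen (set s)\<close> that] unfolding rs B by simp
  show ?case
  proof (cases "h = 0")
    case True
    with lens gcds have "s = [1]" by (cases s) auto
    then have "rs ! 0 = d" using rs_nth[of 0] by simp
    moreover have "rs ! 0 < rs ! 1"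
      using sorted_wrt_nth_less[OF Suc.prems(2), of 0 1] Suc.prems(4) True by simp
    ultimately have "d < x" using x_nth True by simp
    have "-1 \<notin> int ` monoid_gen (set s)" by auto
    from gap[OF this] gap_bound_base[OF d2 \<open>d < x\<close>] True x_nth show ?thesis
      by (intro exI[of _ "int d * -1 + (int d - 1) * int x"]) simp
  next
    case False
    have sorted: "sorted_wrt (<) s"
      using Suc.prems(2) d2 unfolding rs B by (simp add: sorted_wrt_append sorted_wrt_map)
    have "2 * s ! k < s ! Suc k" if "1 \<le> k" "k < h" for k
    proof -
      have "2 * rs ! k < rs ! Suc k" using Suc.prems(6) that by simp
      then have "2 * (d * s ! k) < d * s ! Suc k" using rs_nth that by simp
      then show ?thesis by simp
    qed
    with Suc.IH[OF free sorted gcds lens] False obtain f where f: "f \<notin> int ` monoid_gen (set s)"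
      "5 * 4 ^ h - 9 * 2 ^ h + 1 \<le> 3 * f" "5 * 4 ^ h - 2 \<le> 6 * int (s ! h)"
      by auto
    have "2 * (d * s ! h) < x" using Suc.prems(6)[rule_format, of h] False rs_nth[of h] x_nth by simp
    moreover have "2 * (2 * s ! h) \<le> 2 * (d * s ! h)" using d2 by simp
    ultimately have "4 * s ! h < x" by linarith
    with gap_bound_step[OF _ d2 _ f(2,3)] gap[OF f(1)] False x_nth show ?thesis by auto
  qed
qed

lemma plane_curve_semigroup_arrangement:
  assumes "plane_curve_semigroup G" "sorted_wrt (<) r" "set r = mingens G"
  shows "numerical_semigroup G" and "G = monoid_gen (set r)" and "free_for G r"
    and "\<And>k. 1 \<le> k \<Longrightarrow> k < length r - 1 \<Longrightarrow> eseq r k * r ! k < r ! Suc k"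
proof -
  have "sorted_list_of_set (set r) = r" using assms(2)
    by (simp add: strict_sorted_iff sorted_list_of_set_sort_remdups distinct_remdups_id sorted_sort_id)
  then have "sorted_list_of_set (mingens G) = r" using assms(3) by simp
  then show ns: "numerical_semigroup G" and "free_for G r"
    and "\<And>k. 1 \<le> k \<Longrightarrow> k < length r - 1 \<Longrightarrow> eseq r k * r ! k < r ! Suc k"
    using assms(1) unfolding plane_curve_semigroup_def telescopic_def by (simp_all add: Let_def)
  show "G = monoid_gen (set r)" using monoid_gen_mingens[OF ns] assms(3) by simp
qed

lemma two_le_length_mingens:
  assumes "numerical_semigroup G" "G \<noteq> UNIV" "set r = mingens G"
  shows "2 \<le> length r"
proof (rule ccontr)
  assume "\<not> 2 \<le> length r"
  then have "length r < 2" by simp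
  then have "r = [] \<or> r = [hd r]" by (cases r) (simp_all add: numeral_2_eq_2)
  moreover have "Gcd (set r) = 1" using Gcd_mingens_numerical_semigroup[OF assms(1)] assms(3) by simp
  ultimately have "1 \<in> set r" by (metis Gcd_empty Gcd_insert gcd_0_nat list.set zero_neq_one insertI1)
  then have "G = UNIV" using monoid_gen_mingens[OF assms(1)] assms(3) monoid_gen_one by metis
  with assms(2) show False ..
qed

lemma int_gap_less_conductor:
  assumes "numerical_semigroup G" "f \<notin> int ` G" "0 \<le> f"
  shows "f < int (conductor G)"
proof -
  have "nat f \<notin> G" using assms(2,3) by (metis image_eqI int_nat_eq)
  then have "nat f < conductor G"
    using assms(1) gap_less_conductor unfolding numerical_semigroup_def by blast
  then show ?thesis using assms(3) by linarith
qed

theorem proposition5p2: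
  fixes G :: "nat set" and r :: "nat list" and h :: nat
  assumes "plane_curve_semigroup G"
    and "G \<noteq> UNIV"
    and "sorted_wrt (<) r" and "set r = mingens G" and "length r = h + 1"
  shows "real (conductor G) \<ge> 5/3 * 2 ^ (2 * h) - 3 * 2 ^ h + 4/3"
proof -
  have ns: "numerical_semigroup G" and G: "G = monoid_gen (set r)" and free: "free_for G r"
    and plane: "\<And>k. 1 \<le> k \<Longrightarrow> k < h \<Longrightarrow> eseq r k * r ! k < r ! Suc k"
    using plane_curve_semigroup_arrangement[OF assms(1,3,4)] assms(5) by simp_all
  have "1 \<le> h" using two_le_length_mingens[OF ns assms(2,4)] assms(5) by simp
  have gcd: "Gcd (set r) = 1" using Gcd_mingens_numerical_semigroup[OF ns] assms(4) by simp
  have "2 * r ! k < r ! Suc k" if "1 \<le> k" "k < h" for k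
  proof -
    have "2 \<le> eseq r k" using free_for_eseq_ge_2[of r k] free G that assms(5) by simp
    then have "2 * r ! k \<le> eseq r k * r ! k" by simp
    also have "\<dots> < r ! Suc k" using plane that by simp
    finally show ?thesis .
  qed
  then obtain f where gap: "f \<notin> int ` G" and bound: "5 * 4 ^ h - 9 * 2 ^ h + 1 \<le> 3 * f"
    using free_for_gap_bound[of r h] free G assms(3,5) gcd \<open>1 \<le> h\<close> by auto
  have "0 \<le> f" using gap_bound_ge_3[OF \<open>1 \<le> h\<close>] bound by linarith
  then have "f + 1 \<le> int (conductor G)" using int_gap_less_conductor[OF ns gap] by simp
  then have "real_of_int (f + 1) \<le> real_of_int (int (conductor G))" by (simp only: of_int_le_iff)
  moreover have "real_of_int (5 * 4 ^ h - 9 * 2 ^ h + 1) \<le> real_of_int (3 * f)"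
    using bound by (simp only: of_int_le_iff)
  moreover have "(2::real) ^ (2 * h) = 4 ^ h" by (simp add: power_mult)
  ultimately show ?thesis by simp
qed

end
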